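(* Suppose Assumption A holds, so that $\mathcal A_e:=I_{\bar n-1}\otimes A-L_e\otimes BC$ is Hurwitz. Let $\bar P_e=\int_0^\infty e^{\mathcal A_e t}(E^\top G\otimes B)(E^\top G\otimes B)^\top e^{\mathcal A_e^\top t}\,dt$ be the edge controllability Gramian and $\bar Q_f=\int_0^\infty e^{\mathcal A_e^\top t}(HF\otimes C)^\top(HF\otimes C)e^{\mathcal A_e t}\,dt$ the edge observability Gramian. Let $\tilde\Pi^c,\tilde\Pi^o\in\mathbb{R}^{(\bar n-1)\times(\bar n-1)}$ be diagonal positive semidefinite matrices satisfying $L_e\tilde\Pi^c+\tilde\Pi^cL_e^\top-E^\top GG^\top E\succeq0$ and $L_e^\top\tilde\Pi^o+\tilde\Pi^oL_e-F^\top H^\top HF\succeq0$. Then $\bar P_e\preceq\tilde\Pi^c\otimes Q^{-1}$ and $\bar Q_f\preceq\tilde\Pi^o\otimes Q$.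
   Context: Subsystem data: $Q=Q^\top\succ0$, $J=-J^\top$, $R=R^\top\succeq0$ in $\mathbb{R}^{n\times n}$, $B\in\mathbb{R}^{n\times m}$, $A=(J-R)Q$, $C=B^\top Q$, with $(A,B,C)$ minimal. Weights $w_{ij}\ge0$ ($i\ne j\in\{1,\dots,\bar n\}$, $\bar n\ge 2$); $L_{ij}=-w_{ij}$ for $i\neq j$, $L_{ii}=\sum_{j\ne i}w_{ij}$; $G\in\mathbb{R}^{\bar n\times\bar m}$, $H\in\mathbb{R}^{\bar p\times\bar n}$. The directed graph $\mathcal G$ on $\{1,\dots,\bar n\}$ has an arc $(i,j)$ iff $w_{ji}>0$; the underlying undirected graph $\mathcal G_u$ has an edge between $i$ and $j$ iff $w_{ij}+w_{ji}>0$. $E$ is an oriented incidence matrix of $\mathcal G_u$ (the column for an edge between $i$ and $j$ oriented from $i$ to $j$ is $e_i-e_j$) and $F$ is the matrix of the same size whose corresponding column is $w_{ij}e_i-w_{ji}e_j$ (so $L=FE^\top$). The edge Laplacian is $L_e=E^\top F$. A directed rooted spanning tree is a subgraph of $\mathcal G$ that is a directed tree containing all vertices in which every vertex except one root has exactly one incoming arc. Assumption A: (i) $\mathcal G_u$ is a tree; (ii) $\mathcal G$ contains a directed rooted spanning tree as a subgraph. $\otimes$ is the Kronecker product; $X\preceq Y$ means $Y-X$ is positive semidefinite. *)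

theory Defs
  imports "HOL-Analysis.Analysis"
begin

section \<open>Matrix notions (matrices are real^'c^'r : 'r rows, 'c columns)\<close>

fun mpow :: "real^'n^'n \<Rightarrow> nat \<Rightarrow> real^'n^'n" where
  "mpow M 0 = mat 1"
| "mpow M (Suc k) = M ** mpow M k"

definition mexp :: "real^'n^'n \<Rightarrow> real^'n^'n" where
  "mexp M = (\<Sum>k. (1 / fact k) *\<^sub>R mpow M k)"

definition psd :: "real^'n^'n \<Rightarrow> bool" where
  "psd M \<longleftrightarrow> transpose M = M \<and> (\<forall>x. 0 \<le> x \<bullet> (M *v x))"

definition pd :: "real^'n^'n \<Rightarrow> bool" where
  "pd M \<longleftrightarrow> transpose M = M \<and> (\<forall>x. x \<noteq> 0 \<longrightarrow> 0 < x \<bullet> (M *v x))"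

definition loewner_le :: "real^'n^'n \<Rightarrow> real^'n^'n \<Rightarrow> bool" where
  "loewner_le X Y \<longleftrightarrow> psd (Y - X)"

definition skew :: "real^'n^'n \<Rightarrow> bool" where
  "skew M \<longleftrightarrow> transpose M = - M"

definition is_diagonal :: "real^'n^'n \<Rightarrow> bool" where
  "is_diagonal M \<longleftrightarrow> (\<forall>i j. i \<noteq> j \<longrightarrow> M $ i $ j = 0)"

definition kron :: "real^'b^'a \<Rightarrow> real^'d^'c \<Rightarrow> real^('b \<times> 'd)^('a \<times> 'c)" where
  "kron X Y = (\<chi> r c. X $ fst r $ fst c * Y $ snd r $ snd c)"

definition controllable :: "real^'n^'n \<Rightarrow> real^'m^'n \<Rightarrow> bool" where
  "controllable A B \<longleftrightarrow>
     span {(mpow A k ** B) *v u | k u. k < CARD('n)} = (UNIV :: (real^'n) set)"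

definition observable :: "real^'n^'n \<Rightarrow> real^'n^'p \<Rightarrow> bool" where
  "observable A C \<longleftrightarrow> controllable (transpose A) (transpose C)"

definition minimal :: "real^'n^'n \<Rightarrow> real^'m^'n \<Rightarrow> real^'n^'m \<Rightarrow> bool" where
  "minimal A B C \<longleftrightarrow> controllable A B \<and> observable A C"

section \<open>Graph notions; weights w i j for i \<noteq> j (diagonal values unused)\<close>

definition laplacian :: "('v::finite \<Rightarrow> 'v \<Rightarrow> real) \<Rightarrow> real^'v^'v" where
  "laplacian w = (\<chi> i j. if i = j then (\<Sum>k\<in>UNIV - {i}. w i k) else - w i j)"

definition uadj :: "('v \<Rightarrow> 'v \<Rightarrow> real) \<Rightarrow> 'v \<Rightarrow> 'v \<Rightarrow> bool" where
  "uadj w i j \<longleftrightarrow> i \<noteq> j \<and> w i j + w j i > 0"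

definition ugraph_connected :: "('v \<Rightarrow> 'v \<Rightarrow> real) \<Rightarrow> bool" where
  "ugraph_connected w \<longleftrightarrow> (\<forall>i j. (i, j) \<in> {(a, b). uadj w a b}\<^sup>*)"

definition ugraph_acyclic :: "('v \<Rightarrow> 'v \<Rightarrow> real) \<Rightarrow> bool" where
  "ugraph_acyclic w \<longleftrightarrow>
     \<not> (\<exists>vs. 3 \<le> length vs \<and> distinct vs \<and>
            (\<forall>i < length vs. uadj w (vs ! i) (vs ! ((i + 1) mod length vs))))"

definition ugraph_tree :: "('v \<Rightarrow> 'v \<Rightarrow> real) \<Rightarrow> bool" where
  "ugraph_tree w \<longleftrightarrow> ugraph_connected w \<and> ugraph_acyclic w"

text \<open>Directed graph G: arc (i,j) iff w j i > 0.  A directed rooted spanning tree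
  subgraph: a root r and, for every other vertex v, a unique incoming arc (par v, v)
  of G, such that following parents from any vertex reaches the root (so the
  chosen arcs form a directed tree containing all vertices).\<close>
definition has_rooted_spanning_tree :: "('v \<Rightarrow> 'v \<Rightarrow> real) \<Rightarrow> bool" where
  "has_rooted_spanning_tree w \<longleftrightarrow>
     (\<exists>r par. (\<forall>v. v \<noteq> r \<longrightarrow> par v \<noteq> v \<and> w v (par v) > 0) \<and>
              (\<forall>v. \<exists>k. (par ^^ k) v = r))"

text \<open>The edges of G_u are enumerated by the type 'e; edge e joins src e and tgt e,
  oriented from src e to tgt e.\<close>
definition edge_enum :: "('v \<Rightarrow> 'v \<Rightarrow> real) \<Rightarrow> ('e \<Rightarrow> 'v) \<Rightarrow> ('e \<Rightarrow> 'v) \<Rightarrow> bool" where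
  "edge_enum w src tgt \<longleftrightarrow>
     (\<forall>e. uadj w (src e) (tgt e)) \<and>
     (\<forall>e e'. {src e, tgt e} = {src e', tgt e'} \<longrightarrow> e = e') \<and>
     (\<forall>i j. uadj w i j \<longrightarrow> (\<exists>e. {src e, tgt e} = {i, j}))"

definition incidence :: "('e \<Rightarrow> 'v) \<Rightarrow> ('e \<Rightarrow> 'v) \<Rightarrow> real^'e^'v" where
  "incidence src tgt = (\<chi> i e. if i = src e then 1 else if i = tgt e then -1 else 0)"

definition weighted_incidence ::
  "('v \<Rightarrow> 'v \<Rightarrow> real) \<Rightarrow> ('e \<Rightarrow> 'v) \<Rightarrow> ('e \<Rightarrow> 'v) \<Rightarrow> real^'e^'v" where
  "weighted_incidence w src tgt =
     (\<chi> i e. if i = src e then w (src e) (tgt e)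
             else if i = tgt e then - w (tgt e) (src e) else 0)"

end

theory Submission
  imports Defs
begin

text \<open>If \<open>X \<succeq> 0\<close> and \<open>A X + X A\<^sup>T + K \<preceq> 0\<close>, then along \<open>u(t) = e\<^sup>A\<^sup>T\<^sup>t x\<close> the form
  \<open>u\<^sup>T X u\<close> decreases at least at rate \<open>u\<^sup>T K u\<close>, whose integral is \<open>x\<^sup>T P x\<close> for the Gramian
  \<open>P = \<integral>\<^sub>0\<^sup>\<infinity> e\<^sup>A\<^sup>t K e\<^sup>A\<^sup>T\<^sup>t dt\<close>; hence \<open>P \<preceq> X\<close>.  For the edge system with
  \<open>X = \<Pi> \<otimes> Q\<^sup>-\<^sup>1\<close> the skew part \<open>J\<close> cancels and \<open>B C Q\<^sup>-\<^sup>1 = B B\<^sup>T\<close>, so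
  \<open>A\<^sub>e X + X A\<^sub>e\<^sup>T + B\<^sub>c B\<^sub>c\<^sup>T = -(\<Pi> \<otimes> 2R) - (L\<^sub>e\<Pi> + \<Pi>L\<^sub>e\<^sup>T - E\<^sup>TGG\<^sup>TE) \<otimes> BB\<^sup>T \<preceq> 0\<close>,
  using that \<open>\<Pi>\<close> is diagonal.  The argument needs no stability: if the integrand is not
  integrable the integral is \<open>0 \<preceq> X\<close> by convention, so the graph hypotheses and minimality,
  which only make \<open>A\<^sub>e\<close> Hurwitz, are not used.\<close>

section \<open>Matrix exponential\<close>

text \<open>Square matrices carry no submultiplicative norm instance, so the exponential is taken
  in the Banach algebra of bounded linear operators on \<open>real^'n\<close> and transported back.\<close>

typedef (overloaded) ('n::finite) linop = "UNIV :: ((real^'n) \<Rightarrow>\<^sub>L (real^'n)) set" by simp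
setup_lifting type_definition_linop

instantiation linop :: (finite) real_normed_vector
begin
lift_definition norm_linop :: "'a linop \<Rightarrow> real" is norm .
lift_definition minus_linop :: "'a linop \<Rightarrow> 'a linop \<Rightarrow> 'a linop" is "(-)" .
lift_definition plus_linop :: "'a linop \<Rightarrow> 'a linop \<Rightarrow> 'a linop" is "(+)" .
lift_definition uminus_linop :: "'a linop \<Rightarrow> 'a linop" is "uminus" .
lift_definition zero_linop :: "'a linop" is "0" .
lift_definition scaleR_linop :: "real \<Rightarrow> 'a linop \<Rightarrow> 'a linop" is "scaleR" .
definition dist_linop :: "'a linop \<Rightarrow> 'a linop \<Rightarrow> real"
  where "dist_linop a b = norm (a - b)"
definition uniformity_linop :: "('a linop \<times> 'a linop) filter"
  where "uniformity_linop = (INF e\<in>{0 <..}. principal {(x, y). dist x y < e})"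
definition open_linop :: "'a linop set \<Rightarrow> bool"
  where "open_linop S = (\<forall>x\<in>S. \<forall>\<^sub>F (x', y) in uniformity. x' = x \<longrightarrow> y \<in> S)"
definition sgn_linop :: "'a linop \<Rightarrow> 'a linop"
  where "sgn_linop x = scaleR (inverse (norm x)) x"
instance
  by standard
    (unfold dist_linop_def open_linop_def sgn_linop_def uniformity_linop_def,
     (rule refl | (transfer, force simp: norm_triangle_ineq algebra_simps))+)
end

instantiation linop :: (finite) real_normed_algebra_1
begin
lift_definition times_linop :: "'a linop \<Rightarrow> 'a linop \<Rightarrow> 'a linop" is "(o\<^sub>L)" .
lift_definition one_linop :: "'a linop" is "id_blinfun" .
instance
proof
  show "(0::'a linop) \<noteq> 1"
  proof transfer
    have "blinfun_apply (0::(real^'a) \<Rightarrow>\<^sub>L (real^'a)) 1 \<noteq> blinfun_apply id_blinfun 1"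
      by simp
    then show "(0::(real^'a) \<Rightarrow>\<^sub>L (real^'a)) \<noteq> id_blinfun" by metis
  qed
  show "norm (1::'a linop) = 1"
    by transfer (rule norm_blinfun_id)
qed (transfer; (rule blinfun_eqI; simp add: blinfun.bilinear_simps)?; simp add: norm_blinfun_compose)+
end

lemma dist_linop_Rep: "dist x y = dist (Rep_linop x) (Rep_linop y)"
  unfolding dist_linop_def dist_norm by transfer simp

instance linop :: (finite) banach
proof
  fix X :: "nat \<Rightarrow> 'a linop"
  assume "Cauchy X"
  then have "Cauchy (\<lambda>n. Rep_linop (X n))"
    unfolding Cauchy_def dist_linop_Rep .
  then obtain L where "(\<lambda>n. Rep_linop (X n)) \<longlonglongrightarrow> L"
    using Cauchy_convergent_iff convergent_def by blast
  then have "X \<longlonglongrightarrow> Abs_linop L"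
    unfolding tendsto_iff dist_linop_Rep by (simp add: Abs_linop_inverse)
  then show "convergent X" unfolding convergent_def by blast
qed

lift_definition linop_of_mat :: "real^'n^'n \<Rightarrow> ('n::finite) linop"
  is "\<lambda>M. Blinfun (\<lambda>x. M *v x)" .
lift_definition mat_of_linop :: "('n::finite) linop \<Rightarrow> real^'n^'n"
  is "\<lambda>f. matrix (blinfun_apply f)" .

lemma blinfun_apply_Blinfun_matrix_vector:
  "blinfun_apply (Blinfun (\<lambda>x. M *v x)) = (\<lambda>x. (M::real^'n::finite^'m::finite) *v x)"
  by (rule bounded_linear_Blinfun_apply) (simp add: linear_conv_bounded_linear)

lemma linop_of_mat_mult: "linop_of_mat (M ** N) = linop_of_mat M * linop_of_mat N"
  by transfer
    (rule blinfun_eqI, simp add: blinfun_apply_Blinfun_matrix_vector matrix_vector_mul_assoc)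

lemma linop_of_mat_one: "linop_of_mat (mat 1) = 1"
  by transfer (rule blinfun_eqI, simp add: bounded_linear_Blinfun_apply[OF bounded_linear_ident])

lemma linop_of_mat_scaleR: "linop_of_mat (c *\<^sub>R M) = c *\<^sub>R linop_of_mat M"
  by transfer
    (rule blinfun_eqI,
     simp add: blinfun_apply_Blinfun_matrix_vector scaleR_matrix_vector_assoc scaleR_blinfun.rep_eq)

lemma linop_of_mat_mpow: "linop_of_mat (mpow M k) = linop_of_mat M ^ k"
  by (induction k) (simp_all add: linop_of_mat_one linop_of_mat_mult)

lemma mat_of_linop_of_mat [simp]: "mat_of_linop (linop_of_mat M) = M"
  by transfer (simp add: blinfun_apply_Blinfun_matrix_vector)

lemma mat_of_linop_mult: "mat_of_linop (S * T) = mat_of_linop S ** mat_of_linop T"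
proof transfer
  fix S T :: "(real^'n) \<Rightarrow>\<^sub>L (real^'n)"
  have "blinfun_apply (S o\<^sub>L T) = blinfun_apply S o blinfun_apply T"
    by (rule ext) simp
  then show "matrix (blinfun_apply (S o\<^sub>L T)) = matrix (blinfun_apply S) ** matrix (blinfun_apply T)"
    by (simp add: matrix_compose bounded_linear.linear[OF blinfun.bounded_linear_right])
qed

lemma mat_of_linop_one: "mat_of_linop 1 = mat 1"
proof transfer
  have "blinfun_apply (id_blinfun::(real^'n) \<Rightarrow>\<^sub>L (real^'n)) = id" by (rule ext) simp
  then show "matrix (blinfun_apply (id_blinfun::(real^'n) \<Rightarrow>\<^sub>L (real^'n))) = mat 1"
    by (simp add: matrix_id_mat_1[unfolded id_def])
qed

lemma norm_matrix_blinfun_le: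
  fixes f :: "(real^'n::finite) \<Rightarrow>\<^sub>L (real^'n)"
  shows "norm (matrix (blinfun_apply f)) \<le> norm f * (real CARD('n) * real CARD('n))"
proof -
  have entry: "\<bar>matrix (blinfun_apply f) $ i $ j\<bar> \<le> norm f" for i j
  proof -
    have "\<bar>matrix (blinfun_apply f) $ i $ j\<bar> = \<bar>blinfun_apply f (axis j 1) $ i\<bar>"
      by (simp add: matrix_def)
    also have "\<dots> \<le> norm (blinfun_apply f (axis j 1))" by (rule component_le_norm_cart)
    also have "\<dots> \<le> norm f * norm (axis j (1::real))" by (rule norm_blinfun)
    finally show ?thesis by (simp add: norm_axis_1)
  qed
  have row: "norm (matrix (blinfun_apply f) $ i) \<le> real CARD('n) * norm f" for i
  proof -
    have "norm (matrix (blinfun_apply f) $ i) \<le> (\<Sum>j\<in>UNIV. \<bar>matrix (blinfun_apply f) $ i $ j\<bar>)"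
      by (rule norm_le_l1_cart)
    also have "\<dots> \<le> (\<Sum>j\<in>(UNIV::'n set). norm f)" by (rule sum_mono) (rule entry)
    finally show ?thesis by simp
  qed
  have "norm (matrix (blinfun_apply f)) \<le> (\<Sum>i\<in>UNIV. norm (matrix (blinfun_apply f) $ i))"
    by (simp add: norm_vec_def L2_set_le_sum)
  also have "\<dots> \<le> (\<Sum>i\<in>(UNIV::'n set). real CARD('n) * norm f)" by (rule sum_mono) (rule row)
  finally show ?thesis by (simp add: algebra_simps)
qed

lemma mat_of_linop_scaleR: "mat_of_linop (r *\<^sub>R x) = r *\<^sub>R mat_of_linop x"
  by transfer (simp add: matrix_def vec_eq_iff blinfun.bilinear_simps)

lemma bounded_linear_mat_of_linop: "bounded_linear (mat_of_linop :: 'n::finite linop \<Rightarrow> real^'n^'n)"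
proof (rule bounded_linear_intro[where K="real CARD('n) * real CARD('n)"])
  fix x y :: "'n linop" and r :: real
  show "mat_of_linop (x + y) = mat_of_linop x + mat_of_linop y"
    by transfer (simp add: matrix_def vec_eq_iff blinfun.bilinear_simps)
  show "mat_of_linop (r *\<^sub>R x) = r *\<^sub>R mat_of_linop x"
    by (rule mat_of_linop_scaleR)
  show "norm (mat_of_linop x) \<le> norm x * (real CARD('n) * real CARD('n))"
    by transfer (rule norm_matrix_blinfun_le)
qed

lemma mexp_sums: "(\<lambda>k. (1 / fact k) *\<^sub>R mpow M k) sums mat_of_linop (exp (linop_of_mat M))"
proof -
  have "(\<lambda>k. linop_of_mat M ^ k /\<^sub>R fact k) sums exp (linop_of_mat M)"
    unfolding exp_def by (rule summable_sums) (rule summable_exp_generic)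
  from bounded_linear.sums[OF bounded_linear_mat_of_linop this] show ?thesis
    by (simp add: linop_of_mat_mpow[symmetric] mat_of_linop_scaleR
        divide_inverse_commute)
qed

lemma mexp_eq_exp: "mexp M = mat_of_linop (exp (linop_of_mat M))"
  unfolding mexp_def using mexp_sums by (rule sums_unique[symmetric])

lemma mexp_zero [simp]: "mexp (0 :: real^'n::finite^'n) = mat 1"
proof -
  have "linop_of_mat 0 = (0 :: 'n linop)"
    by (metis linop_of_mat_scaleR scale_zero_left)
  then show ?thesis by (simp add: mexp_eq_exp mat_of_linop_one)
qed

lemma has_vector_derivative_mexp:
  "((\<lambda>t. mexp (t *\<^sub>R M)) has_vector_derivative (M ** mexp (t *\<^sub>R M))) (at t within U)"
  using bounded_linear.has_vector_derivative[OF bounded_linear_mat_of_linop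
      has_vector_derivative_at_within[OF exp_scaleR_has_vector_derivative_left[of "linop_of_mat M"]]]
  by (simp add: mexp_eq_exp linop_of_mat_scaleR mat_of_linop_mult)

lemma mpow_mult_commute: "mpow M k ** M = M ** mpow M k"
  by (induction k) (simp_all add: matrix_mul_assoc[symmetric])

lemma transpose_mpow: "transpose (mpow M k) = mpow (transpose M) k"
  by (induction k) (simp_all add: matrix_transpose_mul mpow_mult_commute)

lemma bounded_linear_transpose: "bounded_linear (transpose :: real^'n::finite^'m::finite \<Rightarrow> real^'m^'n)"
  by (rule linear_conv_bounded_linear[THEN iffD1], rule linearI)
    (simp_all add: transpose_def vec_eq_iff)

lemma transpose_mexp: "transpose (mexp M) = mexp (transpose M)"
proof -
  from bounded_linear.sums[OF bounded_linear_transpose mexp_sums[of M]]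
  have "(\<lambda>k. (1 / fact k) *\<^sub>R mpow (transpose M) k) sums transpose (mexp M)"
    by (simp add: transpose_scalar transpose_mpow mexp_eq_exp)
  then show ?thesis unfolding mexp_def by (rule sums_unique)
qed

lemma transpose_zero [simp]: "transpose (0::'a::zero^'n^'m) = 0"
  by (simp add: transpose_def vec_eq_iff)

lemma transpose_diff: "transpose ((A::'a::ab_group_add^'n^'m) - B) = transpose A - transpose B"
  by (simp add: transpose_def vec_eq_iff)

lemma matrix_add_rdistrib: "((A::'a::semiring_1^'n^'m) + B) ** C = A ** C + B ** C"
  by (simp add: matrix_matrix_mult_def vec_eq_iff sum.distrib algebra_simps)

lemma matrix_diff_ldistrib: "(A::'a::ring_1^'n^'m) ** (B - C) = A ** B - A ** C"
  by (simp add: matrix_matrix_mult_def vec_eq_iff sum_subtractf algebra_simps)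

lemma matrix_diff_rdistrib: "((A::'a::ring_1^'n^'m) - B) ** C = A ** C - B ** C"
  by (simp add: matrix_matrix_mult_def vec_eq_iff sum_subtractf algebra_simps)

lemma matrix_uminus_mult: "(- (A::'a::ring_1^'n^'m)) ** B = - (A ** B)"
  by (simp add: matrix_matrix_mult_def vec_eq_iff sum_negf)

lemma matrix_mult_uminus: "(A::'a::ring_1^'n^'m) ** (- B) = - (A ** B)"
  by (simp add: matrix_matrix_mult_def vec_eq_iff sum_negf)

lemma matrix_vector_mult_uminus_left: "(- M) *v x = - (M *v (x::'a::ring_1^'n))"
  by (simp add: matrix_vector_mult_def vec_eq_iff sum_negf)

lemma bounded_linear_matrix_vector_mult_left:
  "bounded_linear (\<lambda>M::real^'n::finite^'m::finite. M *v x)"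
  by (rule linear_conv_bounded_linear[THEN iffD1], rule linearI)
    (simp_all add: matrix_vector_mult_add_rdistrib scaleR_matrix_vector_assoc)

lemma inner_matrix_vector_left: "(M *v u) \<bullet> y = u \<bullet> (transpose M *v (y::real^'n::finite))"
  by (metis dot_lmul_matrix vector_transpose_matrix)

lemma inner_matrix_vector_expand:
  "(x::real^'a::finite) \<bullet> (W *v x) = (\<Sum>p\<in>UNIV. x$p * (\<Sum>q\<in>UNIV. W$p$q * x$q))"
  by (simp add: inner_vec_def matrix_vector_mult_def)

lemma sum_UNIV_prod: "(\<Sum>p\<in>UNIV. f p) = (\<Sum>i\<in>UNIV. \<Sum>k\<in>UNIV. f (i, k))"
  by (simp add: sum.cartesian_product UNIV_Times_UNIV)

lemma kron_mult:
  fixes A :: "real^'b::finite^'a::finite" and B :: "real^'d::finite^'c::finite"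
    and C :: "real^'e::finite^'b" and D :: "real^'f::finite^'d"
  shows "kron A B ** kron C D = kron (A ** C) (B ** D)"
  by (simp add: kron_def matrix_matrix_mult_def vec_eq_iff sum_UNIV_prod sum_product algebra_simps)

lemma transpose_kron: "transpose (kron A B) = kron (transpose A) (transpose B)"
  by (simp add: kron_def transpose_def vec_eq_iff)

section \<open>Positive semidefinite matrices\<close>

lemma psd_add: "psd A \<Longrightarrow> psd B \<Longrightarrow> psd (A + B)"
  by (simp add: psd_def transpose_def vec_eq_iff matrix_vector_mult_add_rdistrib inner_add_right
      add_nonneg_nonneg)

lemma psd_congruence:
  fixes M :: "real^'n::finite^'m::finite"
  assumes "psd R"
  shows "psd (M ** R ** transpose M)"
  unfolding psd_def
proof safe
  show "transpose (M ** R ** transpose M) = M ** R ** transpose M"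
    using assms by (simp add: psd_def matrix_transpose_mul matrix_mul_assoc)
  fix x
  have "x \<bullet> ((M ** R ** transpose M) *v x) = (transpose M *v x) \<bullet> (R *v (transpose M *v x))"
    by (simp add: dot_lmul_matrix flip: matrix_vector_mul_assoc)
  then show "0 \<le> x \<bullet> ((M ** R ** transpose M) *v x)"
    using assms by (simp add: psd_def)
qed

lemma psd_mat_1: "psd (mat 1)"
  by (simp add: psd_def)

lemma psd_gram: "psd (M ** transpose M)"
  using psd_congruence[OF psd_mat_1, of M] by simp

lemma psd_diagonal_nonneg:
  assumes "psd (D::real^'a::finite^'a)" shows "0 \<le> D$i$i"
proof -
  have "0 \<le> axis i 1 \<bullet> (D *v axis i 1)" using assms by (simp add: psd_def)
  also have "axis i 1 \<bullet> (D *v axis i 1) = D$i$i"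
    by (simp add: inner_matrix_vector_expand axis_def if_distrib if_distribR cong: if_cong)
  finally show ?thesis .
qed

lemma psd_kron_diagonal:
  fixes D :: "real^'a::finite^'a" and R :: "real^'b::finite^'b"
  assumes D: "is_diagonal D" "psd D" and R: "psd R"
  shows "psd (kron D R)"
  unfolding psd_def
proof safe
  show "transpose (kron D R) = kron D R"
    using D(2) R by (simp add: transpose_kron psd_def)
  fix x :: "real^('a \<times> 'b)"
  define y where "y i = (\<chi> k. x $ (i, k))" for i
  have "x \<bullet> (kron D R *v x) =
      (\<Sum>i\<in>UNIV. \<Sum>k\<in>UNIV. x$(i,k) * (\<Sum>j\<in>UNIV. \<Sum>l\<in>UNIV. D$i$j * R$k$l * x$(j,l)))"
    by (simp add: inner_matrix_vector_expand sum_UNIV_prod kron_def)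
  also have "\<dots> = (\<Sum>i\<in>UNIV. \<Sum>k\<in>UNIV. x$(i,k) * (\<Sum>l\<in>UNIV. D$i$i * R$k$l * x$(i,l)))"
  proof -
    have "(\<Sum>j\<in>UNIV. \<Sum>l\<in>UNIV. D$i$j * R$k$l * x$(j,l)) = (\<Sum>l\<in>UNIV. D$i$i * R$k$l * x$(i,l))"
      for i k
    proof -
      have "(\<Sum>j\<in>UNIV. \<Sum>l\<in>UNIV. D$i$j * R$k$l * x$(j,l))
          = (\<Sum>j\<in>UNIV. if j = i then (\<Sum>l\<in>UNIV. D$i$j * R$k$l * x$(j,l)) else 0)"
        using D(1) by (intro sum.cong) (auto simp: is_diagonal_def)
      then show ?thesis by simp
    qed
    then show ?thesis by simp
  qed
  also have "\<dots> = (\<Sum>i\<in>UNIV. D$i$i * (y i \<bullet> (R *v y i)))"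
    by (simp add: inner_matrix_vector_expand y_def sum_distrib_left algebra_simps)
  also have "0 \<le> \<dots>"
    using R unfolding psd_def by (intro sum_nonneg mult_nonneg_nonneg psd_diagonal_nonneg[OF D(2)]) auto
  finally show "0 \<le> x \<bullet> (kron D R *v x)" .
qed

lemma psd_kron_mat_1:
  fixes S :: "real^'a::finite^'a"
  assumes S: "psd S"
  shows "psd (kron S (mat 1 :: real^'b::finite^'b))"
  unfolding psd_def
proof safe
  show "transpose (kron S (mat 1 :: real^'b^'b)) = kron S (mat 1)"
    using S by (simp add: transpose_kron psd_def)
  fix x :: "real^('a \<times> 'b)"
  define z where "z k = (\<chi> i. x $ (i, k))" for k
  have "x \<bullet> (kron S (mat 1 :: real^'b^'b) *v x) =
      (\<Sum>i\<in>UNIV. \<Sum>k\<in>UNIV. x$(i,k) * (\<Sum>j\<in>UNIV. \<Sum>l\<in>UNIV. S$i$j * (if k = l then 1 else 0) * x$(j,l)))"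
    by (simp add: inner_matrix_vector_expand sum_UNIV_prod kron_def mat_def)
  also have "\<dots> = (\<Sum>i\<in>UNIV. \<Sum>k\<in>UNIV. x$(i,k) * (\<Sum>j\<in>UNIV. S$i$j * x$(j,k)))"
    by (simp add: if_distrib if_distribR cong: if_cong)
  also have "\<dots> = (\<Sum>k\<in>UNIV. z k \<bullet> (S *v z k))"
    by (simp add: inner_matrix_vector_expand z_def) (rule sum.swap)
  finally show "0 \<le> x \<bullet> (kron S (mat 1 :: real^'b^'b) *v x)"
    using S by (simp add: sum_nonneg psd_def)
qed

lemma psd_kron_gram:
  fixes S :: "real^'a::finite^'a" and M :: "real^'c::finite^'b::finite"
  assumes "psd S"
  shows "psd (kron S (M ** transpose M))"
  using psd_congruence[OF psd_kron_mat_1[OF assms], of "kron (mat 1) M"]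
  by (simp add: transpose_kron kron_mult)

lemma pd_imp_psd: "pd Q \<Longrightarrow> psd Q"
  unfolding pd_def psd_def by (metis inner_zero_left less_eq_real_def)

lemma pd_matrix_inv:
  fixes Q :: "real^'n::finite^'n"
  assumes "pd Q"
  shows "Q ** matrix_inv Q = mat 1" "matrix_inv Q ** Q = mat 1"
proof -
  have "\<forall>x. Q *v x = 0 \<longrightarrow> x = 0"
    using assms unfolding pd_def by (metis inner_zero_right less_irrefl)
  then have "invertible Q"
    using matrix_left_invertible_ker invertible_left_inverse by blast
  then have "\<exists>Q'. Q ** Q' = mat 1 \<and> Q' ** Q = mat 1" unfolding invertible_def .
  from someI_ex[OF this] show "Q ** matrix_inv Q = mat 1" "matrix_inv Q ** Q = mat 1"
    unfolding matrix_inv_def by auto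
qed

lemma psd_matrix_inv:
  fixes Q :: "real^'n::finite^'n"
  assumes Q: "pd Q"
  shows "psd (matrix_inv Q)"
proof -
  have Qs: "transpose Q = Q" using Q by (simp add: pd_def)
  have "transpose (matrix_inv Q) ** Q = mat 1"
    using arg_cong[OF pd_matrix_inv(1)[OF Q], of transpose] by (simp add: matrix_transpose_mul Qs)
  then have sym: "transpose (matrix_inv Q) = matrix_inv Q"
    by (metis matrix_mul_assoc matrix_mul_lid matrix_mul_rid pd_matrix_inv(1)[OF Q])
  show ?thesis
    using psd_congruence[OF pd_imp_psd[OF Q], of "matrix_inv Q"]
    by (simp add: sym pd_matrix_inv(2)[OF Q])
qed

section \<open>Gramians bounded by Lyapunov inequalities\<close>

lemma integral_atLeast_le_of_partial_integrals_le:
  fixes g :: "real \<Rightarrow> real"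
  assumes cont: "continuous_on {a..} g" and nonneg: "\<And>t. a \<le> t \<Longrightarrow> 0 \<le> g t"
    and partial: "\<And>T. a \<le> T \<Longrightarrow> integral {a..T} g \<le> c"
  shows "integral {a..} g \<le> c"
proof -
  define F where "F = (\<lambda>y. integral {a..y} g)"
  have int: "g integrable_on {a..y}" for y
    by (rule integrable_continuous_interval) (rule continuous_on_subset[OF cont], auto)
  have F_nonneg: "0 \<le> F y" for y
    unfolding F_def by (rule integral_nonneg[OF int]) (simp add: nonneg)
  have "mono F"
  proof (rule monoI)
    fix y y' :: real
    assume "y \<le> y'"
    show "F y \<le> F y'"
    proof (cases "a \<le> y")
      case True
      then show ?thesis unfolding F_def
        using \<open>y \<le> y'\<close> by (intro integral_subset_le int) (auto simp: nonneg)
    next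
      case False
      then show ?thesis using F_nonneg[of y'] by (simp add: F_def)
    qed
  qed
  have F_le: "F y \<le> c" for y
  proof (cases "a \<le> y")
    case True
    then show ?thesis using partial by (simp add: F_def)
  next
    case False
    then show ?thesis using partial[of a] by (simp add: F_def)
  qed
  have "incseq (\<lambda>n. F (real n))"
    using \<open>mono F\<close> by (simp add: incseq_def monoD)
  then obtain l where l: "(\<lambda>n. F (real n)) \<longlonglongrightarrow> l"
    using incseq_convergent F_le by blast
  have "(g has_integral l) {a..}"
    using int tendsto_at_topI_sequentially_real[OF \<open>mono F\<close> l] nonneg
    unfolding F_def by (rule has_integral_to_inf)
  moreover have "l \<le> c"
    using l F_le by (intro LIMSEQ_le_const2) auto
  ultimately show ?thesis by (simp add: integral_unique)
qed

lemma has_vector_derivative_quadratic_form: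
  fixes X :: "real^'n::finite^'n"
  assumes "(u has_vector_derivative u') (at t)"
  shows "((\<lambda>t. u t \<bullet> (X *v u t)) has_vector_derivative u t \<bullet> (X *v u') + u' \<bullet> (X *v u t)) (at t)"
  by (rule bounded_bilinear.has_vector_derivative[OF bounded_bilinear_inner assms
        bounded_linear.has_vector_derivative[OF matrix_vector_mul_bounded_linear assms]])

lemma lyapunov_integral_le:
  fixes M X K :: "real^'n::finite^'n" and u :: "real \<Rightarrow> real^'n"
  assumes u: "\<And>t. (u has_vector_derivative M *v u t) (at t)"
    and X: "psd X" and lyap: "loewner_le (transpose M ** X + X ** M + K) 0" and "0 \<le> T"
  shows "integral {0..T} (\<lambda>t. u t \<bullet> (K *v u t)) \<le> u 0 \<bullet> (X *v u 0)"
proof -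
  define V where "V = (\<lambda>t. u t \<bullet> (X *v u t))"
  define V' where "V' t = u t \<bullet> ((transpose M ** X + X ** M) *v u t)" for t
  define g where "g = (\<lambda>t. u t \<bullet> (K *v u t))"
  have V': "(V has_vector_derivative V' t) (at t)" for t
  proof -
    have "u t \<bullet> (X *v (M *v u t)) + (M *v u t) \<bullet> (X *v u t) = V' t"
      unfolding V'_def inner_matrix_vector_left
      by (simp only: matrix_vector_mult_add_rdistrib inner_add_right matrix_vector_mul_assoc
          add.commute)
    then show ?thesis
      using has_vector_derivative_quadratic_form[OF u, of X t] by (simp add: V_def)
  qed
  have g: "(g has_vector_derivative u t \<bullet> (K *v (M *v u t)) + (M *v u t) \<bullet> (K *v u t)) (at t)" for t
    unfolding g_def by (rule has_vector_derivative_quadratic_form[OF u])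
  have g_cont: "continuous_on {0..T} g"
    using g has_vector_derivative_continuous continuous_at_imp_continuous_on by blast
  have g_le: "g t \<le> - V' t" for t
  proof -
    have "0 \<le> u t \<bullet> ((0 - (transpose M ** X + X ** M + K)) *v u t)"
      using lyap unfolding loewner_le_def psd_def by blast
    then show ?thesis
      by (simp add: g_def V'_def matrix_vector_mult_add_rdistrib matrix_vector_mult_diff_rdistrib
          matrix_vector_mult_uminus_left inner_add_right inner_diff_right)
  qed
  have "(V' has_integral V T - V 0) {0..T}"
    by (rule fundamental_theorem_of_calculus[OF \<open>0 \<le> T\<close>])
      (rule has_vector_derivative_at_within[OF V'])
  then have "((\<lambda>t. - V' t) has_integral - (V T - V 0)) {0..T}"
    by (rule has_integral_neg)
  then have "integral {0..T} g \<le> - (V T - V 0)"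
    using g_le by (rule has_integral_le[OF integrable_integral[OF integrable_continuous_interval[OF g_cont]]])
  moreover have "0 \<le> V T"
    using X by (simp add: V_def psd_def)
  ultimately show ?thesis by (simp add: g_def V_def)
qed

lemma transpose_integral:
  fixes f :: "real \<Rightarrow> real^'n::finite^'n"
  assumes "\<And>t. transpose (f t) = f t"
  shows "transpose (integral S f) = integral S f"
proof (cases "f integrable_on S")
  case True
  have "transpose (integral S f) = integral S (transpose \<circ> f)"
    by (rule integral_linear[OF True bounded_linear_transpose, symmetric])
  also have "transpose \<circ> f = f" using assms by (simp add: o_def)
  finally show ?thesis by simp
qed (simp add: not_integrable_integral)

lemma gramian_le_of_lyapunov:
  fixes A X K :: "real^'n::finite^'n"
  assumes X: "psd X" and K: "psd K" and lyap: "loewner_le (A ** X + X ** transpose A + K) 0"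
  shows "loewner_le (integral {0..} (\<lambda>t::real. mexp (t *\<^sub>R A) ** K ** mexp (t *\<^sub>R transpose A))) X"
proof -
  define f where "f t = mexp (t *\<^sub>R A) ** K ** mexp (t *\<^sub>R transpose A)" for t :: real
  have transpose_mexp_scaled: "transpose (mexp (t *\<^sub>R M)) = mexp (t *\<^sub>R transpose M)" for t M
    by (simp add: transpose_mexp transpose_scalar)
  have f_sym: "transpose (f t) = f t" for t
    using K by (simp add: f_def psd_def matrix_transpose_mul transpose_mexp_scaled matrix_mul_assoc)
  have quad_le: "x \<bullet> (integral {0..} f *v x) \<le> x \<bullet> (X *v x)" for x
  proof (cases "f integrable_on {0..}")
    case False
    then show ?thesis using X by (simp add: not_integrable_integral psd_def)
  next
    case True
    define u where "u t = mexp (t *\<^sub>R transpose A) *v x" for t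
    have f_quad: "x \<bullet> (f t *v x) = u t \<bullet> (K *v u t)" for t
      by (simp add: f_def u_def inner_matrix_vector_left transpose_mexp_scaled
          flip: matrix_vector_mul_assoc)
    have u: "(u has_vector_derivative transpose A *v u t) (at t)" for t
      using bounded_linear.has_vector_derivative[OF bounded_linear_matrix_vector_mult_left
          has_vector_derivative_mexp[of "transpose A" t UNIV]]
      by (simp add: u_def[abs_def] matrix_vector_mul_assoc)
    have "x \<bullet> (integral {0..} f *v x) = integral {0..} (\<lambda>t. x \<bullet> (f t *v x))"
      using integral_linear[OF True bounded_linear_compose[OF bounded_linear_inner_right
            bounded_linear_matrix_vector_mult_left]]
      by (simp add: o_def)
    also have "\<dots> = integral {0..} (\<lambda>t. u t \<bullet> (K *v u t))"
      by (simp only: f_quad)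
    also have "\<dots> \<le> u 0 \<bullet> (X *v u 0)"
    proof (rule integral_atLeast_le_of_partial_integrals_le)
      show "continuous_on {0..} (\<lambda>t. u t \<bullet> (K *v u t))"
        using has_vector_derivative_quadratic_form[OF u] has_vector_derivative_continuous
          continuous_at_imp_continuous_on by blast
      show "0 \<le> u t \<bullet> (K *v u t)" for t using K by (simp add: psd_def)
      show "integral {0..T} (\<lambda>t. u t \<bullet> (K *v u t)) \<le> u 0 \<bullet> (X *v u 0)" if "0 \<le> T" for T
        using lyap by (intro lyapunov_integral_le[OF u X _ that]) simp
    qed
    finally show ?thesis by (simp add: u_def)
  qed
  have "psd (X - integral {0..} f)"
    using X quad_le transpose_integral[of f, OF f_sym]
    by (simp add: psd_def transpose_diff matrix_vector_mult_diff_rdistrib inner_diff_right)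
  then show ?thesis unfolding loewner_le_def f_def .
qed

lemma kron_lyapunov_residual:
  fixes A Y :: "real^'n::finite^'n" and B :: "real^'m::finite^'n" and C :: "real^'n^'m"
    and L P :: "real^'e::finite^'e" and N :: "real^'k::finite^'e"
  assumes Y: "transpose Y = Y" "C ** Y = transpose B"
  defines "Ae \<equiv> kron (mat 1 :: real^'e^'e) A - kron L (B ** C)"
  shows "Ae ** kron P Y + kron P Y ** transpose Ae + kron N B ** transpose (kron N B)
    = kron P (A ** Y + Y ** transpose A)
      - kron (L ** P + P ** transpose L - N ** transpose N) (B ** transpose B)"
proof -
  have BCY: "B ** C ** Y = B ** transpose B"
    using Y by (simp flip: matrix_mul_assoc)
  have YCB: "Y ** (transpose C ** transpose B) = B ** transpose B"
    using arg_cong[OF Y(2), of transpose] Y(1)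
    by (simp add: matrix_mul_assoc matrix_transpose_mul)
  have left: "Ae ** kron P Y = kron P (A ** Y) - kron (L ** P) (B ** transpose B)"
    by (simp add: Ae_def matrix_diff_rdistrib kron_mult BCY)
  have right: "kron P Y ** transpose Ae = kron P (Y ** transpose A) - kron (P ** transpose L) (B ** transpose B)"
    by (simp add: Ae_def transpose_diff transpose_kron matrix_diff_ldistrib kron_mult
        matrix_transpose_mul YCB)
  have input: "kron N B ** transpose (kron N B) = kron (N ** transpose N) (B ** transpose B)"
    by (simp add: transpose_kron kron_mult)
  show ?thesis
    unfolding left right input by (simp add: kron_def vec_eq_iff matrix_add_ldistrib algebra_simps)
qed

lemma kron_gramian_le:
  fixes A Y Z :: "real^'n::finite^'n" and B :: "real^'m::finite^'n" and C :: "real^'n^'m"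
    and L P :: "real^'e::finite^'e" and N :: "real^'k::finite^'e"
  assumes Y: "psd Y" "C ** Y = transpose B"
    and Z: "A ** Y + Y ** transpose A = - Z" "psd Z"
    and P: "is_diagonal P" "psd P"
    and S: "psd (L ** P + P ** transpose L - N ** transpose N)"
  defines "Ae \<equiv> kron (mat 1 :: real^'e^'e) A - kron L (B ** C)" and "Bc \<equiv> kron N B"
  shows "loewner_le (integral {0..} (\<lambda>t::real. mexp (t *\<^sub>R Ae) ** Bc ** transpose Bc
                                                ** mexp (t *\<^sub>R transpose Ae)))
           (kron P Y)"
proof -
  have "Ae ** kron P Y + kron P Y ** transpose Ae + Bc ** transpose Bc
      = - (kron P Z + kron (L ** P + P ** transpose L - N ** transpose N) (B ** transpose B))"
    using kron_lyapunov_residual[of Y C B A L P N] Y Z(1)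
    by (simp add: Ae_def Bc_def psd_def kron_def vec_eq_iff)
  then have "loewner_le (Ae ** kron P Y + kron P Y ** transpose Ae + Bc ** transpose Bc) 0"
    unfolding loewner_le_def by (simp add: psd_add psd_kron_diagonal psd_kron_gram P Z(2) S)
  then have "loewner_le (integral {0..} (\<lambda>t::real. mexp (t *\<^sub>R Ae) ** (Bc ** transpose Bc)
                                                ** mexp (t *\<^sub>R transpose Ae))) (kron P Y)"
    by (intro gramian_le_of_lyapunov psd_kron_diagonal P Y(1) psd_gram)
  then show ?thesis by (simp add: matrix_mul_assoc)
qed

section \<open>The edge system\<close>

lemma port_hamiltonian_lyapunov_eq:
  fixes Q J R :: "real^'n::finite^'n"
  assumes Q: "pd Q" and J: "skew J" and R: "psd R"
  shows "(J - R) ** Q ** matrix_inv Q + matrix_inv Q ** transpose ((J - R) ** Q) = - (R + R)"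
proof -
  have "(J - R) ** Q ** matrix_inv Q = J - R"
    by (simp add: pd_matrix_inv[OF Q] flip: matrix_mul_assoc)
  moreover have "matrix_inv Q ** transpose ((J - R) ** Q) = - J - R"
    using Q J R
    by (simp add: pd_def skew_def psd_def matrix_transpose_mul transpose_diff pd_matrix_inv[OF Q]
        matrix_mul_assoc)
  ultimately show ?thesis
    by simp
qed

lemma port_hamiltonian_lyapunov_eq_transpose:
  fixes Q J R :: "real^'n::finite^'n"
  assumes Qs: "transpose Q = Q" and J: "skew J" and R: "psd R"
  shows "transpose ((J - R) ** Q) ** Q + Q ** ((J - R) ** Q) = - (Q ** (R + R) ** Q)"
proof -
  have JR: "transpose (J - R) = - J - R"
    using J R by (simp add: skew_def psd_def transpose_diff)
  have "transpose ((J - R) ** Q) ** Q = Q ** (- J - R) ** Q"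
    by (simp add: matrix_transpose_mul Qs JR matrix_mul_assoc)
  moreover have "Q ** ((J - R) ** Q) = Q ** (J - R) ** Q"
    by (simp add: matrix_mul_assoc)
  ultimately have "transpose ((J - R) ** Q) ** Q + Q ** ((J - R) ** Q)
      = Q ** ((- J - R) + (J - R)) ** Q"
    by (simp only: matrix_add_ldistrib matrix_add_rdistrib)
  also have "(- J - R) + (J - R) = - (R + R)"
    by simp
  finally show ?thesis
    by (simp only: matrix_mult_uminus matrix_uminus_mult)
qed

lemma edge_controllability_gramian_le:
  fixes Q J R :: "real^'n::finite^'n" and B :: "real^'m::finite^'n"
    and Le D :: "real^'e::finite^'e" and N :: "real^'k::finite^'e"
  assumes Q: "pd Q" and J: "skew J" and R: "psd R"
    and D: "is_diagonal D" "psd D"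
    and S: "psd (Le ** D + D ** transpose Le - N ** transpose N)"
  defines "Ae \<equiv> kron (mat 1 :: real^'e^'e) ((J - R) ** Q) - kron Le (B ** (transpose B ** Q))"
    and "Bc \<equiv> kron N B"
  shows "loewner_le (integral {0..} (\<lambda>t::real. mexp (t *\<^sub>R Ae) ** Bc ** transpose Bc
                                                ** mexp (t *\<^sub>R transpose Ae)))
           (kron D (matrix_inv Q))"
  unfolding Ae_def Bc_def
proof (rule kron_gramian_le[OF psd_matrix_inv[OF Q] _ _ psd_add[OF R R] D S])
  show "transpose B ** Q ** matrix_inv Q = transpose B"
    by (simp add: pd_matrix_inv[OF Q] flip: matrix_mul_assoc)
  show "(J - R) ** Q ** matrix_inv Q + matrix_inv Q ** transpose ((J - R) ** Q) = - (R + R)"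
    using Q J R by (rule port_hamiltonian_lyapunov_eq)
qed

text \<open>The observability Gramian is the controllability Gramian of the transposed edge system,
  with Lyapunov weight \<open>Q\<close> in place of \<open>Q\<^sup>-\<^sup>1\<close>.\<close>

lemma edge_observability_gramian_le:
  fixes Q J R :: "real^'n::finite^'n" and B :: "real^'m::finite^'n"
    and Le D :: "real^'e::finite^'e" and M :: "real^'e^'p::finite"
  assumes Q: "pd Q" and J: "skew J" and R: "psd R"
    and D: "is_diagonal D" "psd D"
    and S: "psd (transpose Le ** D + D ** Le - transpose M ** M)"
  defines "Ae \<equiv> kron (mat 1 :: real^'e^'e) ((J - R) ** Q) - kron Le (B ** (transpose B ** Q))"
    and "Co \<equiv> kron M (transpose B ** Q)"
  shows "loewner_le (integral {0..} (\<lambda>t::real. mexp (t *\<^sub>R transpose Ae) ** transpose Co ** Co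
                                                ** mexp (t *\<^sub>R Ae)))
           (kron D Q)"
proof -
  define A where "A = (J - R) ** Q"
  define C where "C = transpose B ** Q"
  have Qs: "transpose Q = Q" using Q by (simp add: pd_def)
  have lyap: "transpose A ** Q + Q ** transpose (transpose A) = - (Q ** (R + R) ** transpose Q)"
    unfolding transpose_transpose Qs A_def using Qs J R by (rule port_hamiltonian_lyapunov_eq_transpose)
  have transpose_Ae: "transpose Ae
      = kron (mat 1 :: real^'e^'e) (transpose A) - kron (transpose Le) (transpose C ** transpose B)"
    by (simp add: Ae_def A_def C_def transpose_diff transpose_kron matrix_transpose_mul)
  have transpose_Co: "transpose Co = kron (transpose M) (transpose C)"
    by (simp add: Co_def C_def transpose_kron)
  have "loewner_le (integral {0..} (\<lambda>t::real. mexp (t *\<^sub>R transpose Ae)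
      ** transpose Co ** transpose (transpose Co) ** mexp (t *\<^sub>R transpose (transpose Ae))))
      (kron D Q)"
    unfolding transpose_Ae transpose_Co
  proof (rule kron_gramian_le[OF pd_imp_psd[OF Q] _ lyap psd_congruence[OF psd_add[OF R R]] D])
    show "transpose B ** Q = transpose (transpose C)"
      by (simp add: C_def)
    show "psd (transpose Le ** D + D ** transpose (transpose Le) - transpose M ** transpose (transpose M))"
      using S by simp
  qed
  then show ?thesis
    by simp
qed

theorem theorem2:
  fixes Q J R :: "real^'n^'n" and B :: "real^'m^'n"
    and w :: "'v::finite \<Rightarrow> 'v \<Rightarrow> real"
    and src tgt :: "'e::finite \<Rightarrow> 'v"
    and G :: "real^'k^'v" and H :: "real^'v^'p"
    and Pic Pio :: "real^'e^'e"
  assumes Q: "pd Q" and J: "skew J" and R: "psd R"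
    and min: "minimal ((J - R) ** Q) B (transpose B ** Q)"
    and nv: "CARD('v) \<ge> 2"
    and w: "\<And>i j. i \<noteq> j \<Longrightarrow> w i j \<ge> 0"
    and tree: "ugraph_tree w"
    and rst: "has_rooted_spanning_tree w"
    and enum: "edge_enum w src tgt"
    and Pic: "is_diagonal Pic" "psd Pic"
    and Pio: "is_diagonal Pio" "psd Pio"
    and ineq_c: "psd (transpose (incidence src tgt) ** weighted_incidence w src tgt ** Pic
                      + Pic ** transpose (transpose (incidence src tgt) ** weighted_incidence w src tgt)
                      - transpose (incidence src tgt) ** G ** transpose G ** incidence src tgt)"
    and ineq_o: "psd (transpose (transpose (incidence src tgt) ** weighted_incidence w src tgt) ** Pio
                      + Pio ** (transpose (incidence src tgt) ** weighted_incidence w src tgt)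
                      - transpose (weighted_incidence w src tgt) ** transpose H ** H
                          ** weighted_incidence w src tgt)"
  shows "let A = (J - R) ** Q; C = transpose B ** Q;
             E = incidence src tgt; F = weighted_incidence w src tgt;
             Le = transpose E ** F;
             Ae = kron (mat 1 :: real^'e^'e) A - kron Le (B ** C);
             Bc = kron (transpose E ** G) B;
             Co = kron (H ** F) C;
             Pe = integral {0..} (\<lambda>t::real. mexp (t *\<^sub>R Ae) ** Bc ** transpose Bc
                                              ** mexp (t *\<^sub>R transpose Ae));
             Qf = integral {0..} (\<lambda>t::real. mexp (t *\<^sub>R transpose Ae) ** transpose Co ** Co
                                              ** mexp (t *\<^sub>R Ae))
         in loewner_le Pe (kron Pic (matrix_inv Q)) \<and> loewner_le Qf (kron Pio Q)"
  unfolding Let_def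
proof (rule conjI[OF edge_controllability_gramian_le[OF Q J R Pic]
                    edge_observability_gramian_le[OF Q J R Pio]])
  show "psd (transpose (incidence src tgt) ** weighted_incidence w src tgt ** Pic
      + Pic ** transpose (transpose (incidence src tgt) ** weighted_incidence w src tgt)
      - transpose (incidence src tgt) ** G ** transpose (transpose (incidence src tgt) ** G))"
    using ineq_c by (simp add: matrix_transpose_mul matrix_mul_assoc)
  show "psd (transpose (transpose (incidence src tgt) ** weighted_incidence w src tgt) ** Pio
      + Pio ** (transpose (incidence src tgt) ** weighted_incidence w src tgt)
      - transpose (H ** weighted_incidence w src tgt) ** (H ** weighted_incidence w src tgt))"
    using ineq_o by (simp add: matrix_transpose_mul matrix_mul_assoc)
qed

end
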